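(* Let $H$ be a Hilbert space of holomorphic functions on the unit disk $\mathbb D$ such that norm convergence in $H$ implies pointwise convergence on $\mathbb D$ and $H$ contains the polynomials. Let $K(z,w)$ be its reproducing kernel and, for $j\ge0$, $k_{0,j}(z):=\frac1{j!}\frac{\partial^j}{\partial\overline w^j}K(z,w)\big|_{w=0}$. For $\alpha\ge0$ and $h\in H$ with Taylor coefficients $\hat h(j)$, let $\sigma_n^\alpha(h):=\sum_{j=0}^n\binom{n}{j}\big/\binom{n+\alpha}{j}\,\hat h(j)z^j$. If $\sigma_n^\alpha(h)\to h$ (weakly or in norm) in $H$ for all $h\in H$, then \[ \|z^j\|_H\,\|k_{0,j}\|_H=O(j^\alpha)\quad(j\to\infty). \]
   Context: The reproducing kernel is $K(z,w)=k_w(z)$ where $k_w\in H$ satisfies $h(w)=\langle h,k_w\rangle$ for all $h\in H$. Binomial coefficients with non-integer arguments are defined via the Gamma function. *)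

theory Defs
  imports "HOL-Analysis.Analysis" "HOL-Library.Landau_Symbols"
begin

text \<open>A Hilbert space of holomorphic functions on the unit disk is modelled as a set
  H of functions complex => complex (each holomorphic on the open unit disk and, as a
  canonical representative, equal to 0 off the disk) together with an inner product ip
  which is linear in the first and conjugate-linear in the second argument.\<close>

definition hnorm :: "((complex \<Rightarrow> complex) \<Rightarrow> (complex \<Rightarrow> complex) \<Rightarrow> complex)
    \<Rightarrow> (complex \<Rightarrow> complex) \<Rightarrow> real" where
  "hnorm ip f = sqrt (Re (ip f f))"

definition hol_hilbert_space ::
  "(complex \<Rightarrow> complex) set \<Rightarrow> ((complex \<Rightarrow> complex) \<Rightarrow> (complex \<Rightarrow> complex) \<Rightarrow> complex) \<Rightarrow> bool"
  where
  "hol_hilbert_space H ip \<longleftrightarrow>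
     (\<forall>f\<in>H. f holomorphic_on ball 0 1 \<and> (\<forall>z. z \<notin> ball 0 1 \<longrightarrow> f z = 0)) \<and>
     (\<lambda>z. 0) \<in> H \<and>
     (\<forall>f\<in>H. \<forall>g\<in>H. (\<lambda>z. f z + g z) \<in> H) \<and>
     (\<forall>f\<in>H. \<forall>c. (\<lambda>z. c * f z) \<in> H) \<and>
     (\<forall>f\<in>H. \<forall>g\<in>H. \<forall>h\<in>H. ip (\<lambda>z. f z + g z) h = ip f h + ip g h) \<and>
     (\<forall>f\<in>H. \<forall>h\<in>H. \<forall>c. ip (\<lambda>z. c * f z) h = c * ip f h) \<and>
     (\<forall>f\<in>H. \<forall>g\<in>H. ip g f = cnj (ip f g)) \<and>
     (\<forall>f\<in>H. 0 \<le> Re (ip f f)) \<and>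
     (\<forall>f\<in>H. ip f f = 0 \<longrightarrow> f = (\<lambda>z. 0)) \<and>
     (\<forall>s. (\<forall>n. s n \<in> H) \<and>
          (\<forall>e>0. \<exists>N. \<forall>m\<ge>N. \<forall>n\<ge>N. hnorm ip (\<lambda>z. s m z - s n z) < e)
          \<longrightarrow> (\<exists>f\<in>H. (\<lambda>n. hnorm ip (\<lambda>z. s n z - f z)) \<longlonglongrightarrow> 0))"

definition norm_conv_implies_pointwise ::
  "(complex \<Rightarrow> complex) set \<Rightarrow> ((complex \<Rightarrow> complex) \<Rightarrow> (complex \<Rightarrow> complex) \<Rightarrow> complex) \<Rightarrow> bool"
  where
  "norm_conv_implies_pointwise H ip \<longleftrightarrow>
     (\<forall>s f. (\<forall>n. s n \<in> H) \<and> f \<in> H \<and> (\<lambda>n. hnorm ip (\<lambda>z. s n z - f z)) \<longlonglongrightarrow> 0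
        \<longrightarrow> (\<forall>z\<in>ball 0 1. (\<lambda>n. s n z) \<longlonglongrightarrow> f z))"

definition dmon :: "nat \<Rightarrow> complex \<Rightarrow> complex" where
  "dmon j = (\<lambda>z. if z \<in> ball 0 1 then z ^ j else 0)"

definition is_repr_kernel ::
  "(complex \<Rightarrow> complex) set \<Rightarrow> ((complex \<Rightarrow> complex) \<Rightarrow> (complex \<Rightarrow> complex) \<Rightarrow> complex)
     \<Rightarrow> (complex \<Rightarrow> complex \<Rightarrow> complex) \<Rightarrow> bool" where
  "is_repr_kernel H ip K \<longleftrightarrow>
     (\<forall>w\<in>ball 0 1. (\<lambda>z. K z w) \<in> H \<and> (\<forall>h\<in>H. h w = ip h (\<lambda>z. K z w)))"

definition taylor_coeff :: "(complex \<Rightarrow> complex) \<Rightarrow> nat \<Rightarrow> complex" where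
  "taylor_coeff h j = (deriv ^^ j) h 0 / fact j"

text \<open>k_{0,j}(z) = (1/j!) d^j/d(conj w)^j K(z,w) at w = 0. Since w \<mapsto> K(z,w) is
  antiholomorphic, this is conj of the j-th complex derivative of w \<mapsto> conj (K z w) at 0.\<close>
definition kder :: "(complex \<Rightarrow> complex \<Rightarrow> complex) \<Rightarrow> nat \<Rightarrow> complex \<Rightarrow> complex" where
  "kder K j = (\<lambda>z. cnj ((deriv ^^ j) (\<lambda>w. cnj (K z w)) 0) / fact j)"

definition cesaro :: "real \<Rightarrow> nat \<Rightarrow> (complex \<Rightarrow> complex) \<Rightarrow> complex \<Rightarrow> complex" where
  "cesaro \<alpha> n h = (\<lambda>z. if z \<in> ball 0 1 then
      (\<Sum>j=0..n. complex_of_real (real (n choose j) / ((real n + \<alpha>) gchoose j))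
                  * taylor_coeff h j * z ^ j)
      else 0)"

end

theory Submission
  imports Defs "HOL-Complex_Analysis.Cauchy_Integral_Formula"
begin

text \<open>If the Cesaro means sigma_n converge weakly for every h, the uniform boundedness principle
  (applied twice) gives a uniform operator bound M. Inverting the summation method, the monomial
  part of h is the finite combination hat h(n) z^n = sum_{k <= n} b(n - k) A(k) sigma_k(h), where
  A(k) = binom(k + alpha, k) = O(k^alpha) are the Cesaro numbers and b(m) the coefficients of
  (1 - x)^(alpha + 1), which are absolutely summable. Hence |hat h(n)| nrm z^n is at most
  M (sum |b|) A(n) nrm h. The functional h \<mapsto> hat h(n) is bounded (Cauchy estimates and
  uniformly bounded point evaluations), and k_{0,n} is its Riesz representer, so the same bound
  holds for nrm z^n * nrm k_{0,n}.\<close>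

section \<open>Hilbert spaces of functions on the disk\<close>

definition fadd :: "(complex \<Rightarrow> complex) \<Rightarrow> (complex \<Rightarrow> complex) \<Rightarrow> complex \<Rightarrow> complex"
  where "fadd f g = (\<lambda>z. f z + g z)"

definition fsub :: "(complex \<Rightarrow> complex) \<Rightarrow> (complex \<Rightarrow> complex) \<Rightarrow> complex \<Rightarrow> complex"
  where "fsub f g = (\<lambda>z. f z - g z)"

definition fscale :: "complex \<Rightarrow> (complex \<Rightarrow> complex) \<Rightarrow> complex \<Rightarrow> complex"
  where "fscale c f = (\<lambda>z. c * f z)"

lemma fsub_eq_fadd_fscale: "fsub f g = fadd f (fscale (-1) g)"
  by (auto simp: fsub_def fadd_def fscale_def)

locale hilbert_fun_space =
  fixes H :: "(complex \<Rightarrow> complex) set"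
    and ip :: "(complex \<Rightarrow> complex) \<Rightarrow> (complex \<Rightarrow> complex) \<Rightarrow> complex"
  assumes hilbert: "hol_hilbert_space H ip"
begin

abbreviation nrm :: "(complex \<Rightarrow> complex) \<Rightarrow> real" where "nrm \<equiv> hnorm ip"

lemma zero_in [simp]: "(\<lambda>z. 0) \<in> H"
  using hilbert unfolding hol_hilbert_space_def by blast

lemma fadd_in [simp]: "f \<in> H \<Longrightarrow> g \<in> H \<Longrightarrow> fadd f g \<in> H"
  using hilbert unfolding hol_hilbert_space_def fadd_def by blast

lemma fscale_in [simp]: "f \<in> H \<Longrightarrow> fscale c f \<in> H"
  using hilbert unfolding hol_hilbert_space_def fscale_def by blast

lemma fsub_in [simp]: "f \<in> H \<Longrightarrow> g \<in> H \<Longrightarrow> fsub f g \<in> H"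
  by (simp add: fsub_eq_fadd_fscale)

lemma sum_in: "(\<And>k. k \<in> A \<Longrightarrow> f k \<in> H) \<Longrightarrow> (\<lambda>z. \<Sum>k\<in>A. f k z) \<in> H"
proof (induction A rule: infinite_finite_induct)
  case (insert x F)
  have "(\<lambda>z. \<Sum>k\<in>insert x F. f k z) = fadd (f x) (\<lambda>z. \<Sum>k\<in>F. f k z)"
    using insert by (auto simp: fadd_def)
  then show ?case using insert by simp
qed auto

lemma holomorphic_on_disk: "f \<in> H \<Longrightarrow> f holomorphic_on ball 0 1"
  using hilbert unfolding hol_hilbert_space_def by blast

lemma vanishes_off_disk: "f \<in> H \<Longrightarrow> z \<notin> ball 0 1 \<Longrightarrow> f z = 0"
  using hilbert unfolding hol_hilbert_space_def by blast

lemma ip_fadd_left: "f \<in> H \<Longrightarrow> g \<in> H \<Longrightarrow> h \<in> H \<Longrightarrow> ip (fadd f g) h = ip f h + ip g h"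
  using hilbert unfolding hol_hilbert_space_def fadd_def by blast

lemma ip_fscale_left: "f \<in> H \<Longrightarrow> h \<in> H \<Longrightarrow> ip (fscale c f) h = c * ip f h"
  using hilbert unfolding hol_hilbert_space_def fscale_def by blast

lemma ip_commute: "f \<in> H \<Longrightarrow> g \<in> H \<Longrightarrow> ip g f = cnj (ip f g)"
  using hilbert unfolding hol_hilbert_space_def by blast

lemma ip_self_nonneg: "f \<in> H \<Longrightarrow> 0 \<le> Re (ip f f)"
  using hilbert unfolding hol_hilbert_space_def by blast

lemma ip_self_eq_0D: "f \<in> H \<Longrightarrow> ip f f = 0 \<Longrightarrow> f = (\<lambda>z. 0)"
  using hilbert unfolding hol_hilbert_space_def by blast

lemma Cauchy_has_limit:
  "(\<And>n. s n \<in> H) \<Longrightarrow> (\<forall>e>0. \<exists>N. \<forall>m\<ge>N. \<forall>n\<ge>N. nrm (fsub (s m) (s n)) < e)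
    \<Longrightarrow> \<exists>f\<in>H. (\<lambda>n. nrm (fsub (s n) f)) \<longlonglongrightarrow> 0"
  using hilbert unfolding hol_hilbert_space_def fsub_def by blast

lemma ip_fadd_right: "f \<in> H \<Longrightarrow> g \<in> H \<Longrightarrow> h \<in> H \<Longrightarrow> ip h (fadd f g) = ip h f + ip h g"
  by (simp add: ip_commute[where g = h] ip_fadd_left)

lemma ip_fscale_right: "f \<in> H \<Longrightarrow> h \<in> H \<Longrightarrow> ip h (fscale c f) = cnj c * ip h f"
  by (simp add: ip_commute[where g = h] ip_fscale_left)

lemma ip_fsub_left: "f \<in> H \<Longrightarrow> g \<in> H \<Longrightarrow> h \<in> H \<Longrightarrow> ip (fsub f g) h = ip f h - ip g h"
  by (simp add: fsub_eq_fadd_fscale ip_fadd_left ip_fscale_left)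

lemma ip_fsub_right: "f \<in> H \<Longrightarrow> g \<in> H \<Longrightarrow> h \<in> H \<Longrightarrow> ip h (fsub f g) = ip h f - ip h g"
  by (simp add: fsub_eq_fadd_fscale ip_fadd_right ip_fscale_right)

lemma ip_self_eq_of_real: "f \<in> H \<Longrightarrow> ip f f = complex_of_real ((nrm f)\<^sup>2)"
proof -
  assume f: "f \<in> H"
  have "Im (ip f f) = 0" using ip_commute[OF f f]
    by (metis cnj.sel(2) equation_minus_iff zero_complex.sel(2) neg_equal_zero)
  then show ?thesis using ip_self_nonneg[OF f] by (simp add: hnorm_def complex_eq_iff)
qed

lemma nrm_nonneg [simp]: "f \<in> H \<Longrightarrow> 0 \<le> nrm f"
  using ip_self_nonneg by (simp add: hnorm_def)

lemma nrm_eq_0D: "f \<in> H \<Longrightarrow> nrm f = 0 \<Longrightarrow> f = (\<lambda>z. 0)"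
  using ip_self_eq_of_real ip_self_eq_0D by fastforce

lemma ip_zero_right: "h \<in> H \<Longrightarrow> ip h (\<lambda>z. 0) = 0"
  using ip_fscale_right[of h h 0] by (simp add: fscale_def)

lemma nrm_zero [simp]: "nrm (\<lambda>z. 0) = 0"
  using ip_zero_right[OF zero_in] by (simp add: hnorm_def)

lemma nrm_fscale: "f \<in> H \<Longrightarrow> nrm (fscale c f) = cmod c * nrm f"
proof -
  assume f: "f \<in> H"
  have "ip (fscale c f) (fscale c f) = c * cnj c * ip f f"
    using f by (simp add: ip_fscale_left ip_fscale_right)
  also have "\<dots> = complex_of_real ((cmod c)\<^sup>2) * ip f f"
    by (simp only: complex_norm_square)
  finally have "ip (fscale c f) (fscale c f) = complex_of_real ((cmod c)\<^sup>2) * ip f f" .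
  then have "Re (ip (fscale c f) (fscale c f)) = (cmod c * nrm f)\<^sup>2"
    using f by (simp add: ip_self_eq_of_real power_mult_distrib)
  then show ?thesis using f ip_self_nonneg[OF f] by (simp add: hnorm_def)
qed

lemma ip_cauchy_schwarz:
  assumes f: "f \<in> H" and g: "g \<in> H"
  shows "cmod (ip f g) \<le> nrm f * nrm g"
proof (cases "nrm g = 0")
  case True
  then show ?thesis using nrm_eq_0D[OF g] ip_zero_right[OF f] f by simp
next
  case False
  define a where "a = ip f g"
  define n where "n = (nrm g)\<^sup>2"
  have n0: "n > 0" using False unfolding n_def by simp
  define t where "t = a / complex_of_real n"
  have fg: "ip g f = cnj a" using ip_commute[OF f g] unfolding a_def by simp
  have gg: "ip g g = complex_of_real n" using ip_self_eq_of_real[OF g] unfolding n_def by simp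
  have "ip (fsub f (fscale t g)) (fsub f (fscale t g))
      = ip f f - cnj t * a - (t * cnj a - t * cnj t * complex_of_real n)"
    using f g
    by (simp add: ip_fsub_left ip_fsub_right ip_fscale_left ip_fscale_right fg gg a_def algebra_simps)
  also have "\<dots> = ip f f - a * cnj a / complex_of_real n"
    using n0 unfolding t_def by (simp add: field_simps)
  also have "\<dots> = ip f f - complex_of_real ((cmod a)\<^sup>2 / n)"
    by (simp add: complex_norm_square[symmetric])
  finally have "ip (fsub f (fscale t g)) (fsub f (fscale t g))
      = ip f f - complex_of_real ((cmod a)\<^sup>2 / n)" .
  then have "Re (ip (fsub f (fscale t g)) (fsub f (fscale t g))) = (nrm f)\<^sup>2 - (cmod a)\<^sup>2 / n"
    using f by (simp add: ip_self_eq_of_real)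
  then have "0 \<le> (nrm f)\<^sup>2 - (cmod a)\<^sup>2 / n"
    using ip_self_nonneg[of "fsub f (fscale t g)"] f g by simp
  then have "(cmod a)\<^sup>2 \<le> (nrm f)\<^sup>2 * n"
    using n0 by (simp add: field_simps)
  then have "(cmod a)\<^sup>2 \<le> (nrm f * nrm g)\<^sup>2"
    unfolding n_def by (simp only: power_mult_distrib)
  then show ?thesis unfolding a_def by (rule power2_le_imp_le) (simp add: f g)
qed


lemma nrm_parallelogram:
  assumes f: "f \<in> H" and g: "g \<in> H"
  shows "(nrm (fadd f g))\<^sup>2 + (nrm (fsub f g))\<^sup>2 = 2 * (nrm f)\<^sup>2 + 2 * (nrm g)\<^sup>2"
proof -
  have "ip (fadd f g) (fadd f g) + ip (fsub f g) (fsub f g) = 2 * ip f f + 2 * ip g g"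
    using f g by (simp add: ip_fadd_left ip_fadd_right ip_fsub_left ip_fsub_right)
  then have "complex_of_real ((nrm (fadd f g))\<^sup>2 + (nrm (fsub f g))\<^sup>2)
      = complex_of_real (2 * (nrm f)\<^sup>2 + 2 * (nrm g)\<^sup>2)"
    using f g by (simp add: ip_self_eq_of_real)
  then show ?thesis by (simp only: of_real_eq_iff)
qed

lemma nrm_triangle_ineq:
  assumes f: "f \<in> H" and g: "g \<in> H"
  shows "nrm (fadd f g) \<le> nrm f + nrm g"
proof -
  have "ip (fadd f g) (fadd f g) = ip f f + ip g g + (ip f g + cnj (ip f g))"
    using f g ip_commute[OF f g] by (simp add: ip_fadd_left ip_fadd_right)
  then have "(nrm (fadd f g))\<^sup>2 = (nrm f)\<^sup>2 + (nrm g)\<^sup>2 + 2 * Re (ip f g)"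
    using f g by (simp add: ip_self_eq_of_real complex_eq_iff)
  also have "\<dots> \<le> (nrm f + nrm g)\<^sup>2"
    using ip_cauchy_schwarz[OF f g] complex_Re_le_cmod[of "ip f g"] by (simp add: power2_sum)
  finally show ?thesis by (rule power2_le_imp_le) (simp add: f g)
qed

lemma nrm_minus_commute: "f \<in> H \<Longrightarrow> g \<in> H \<Longrightarrow> nrm (fsub f g) = nrm (fsub g f)"
proof -
  assume "f \<in> H" "g \<in> H"
  moreover have "fsub f g = fscale (-1) (fsub g f)" by (auto simp: fsub_def fscale_def)
  ultimately show ?thesis by (simp add: nrm_fscale)
qed

lemma nrm_triangle_ineq2: "f \<in> H \<Longrightarrow> g \<in> H \<Longrightarrow> nrm f - nrm g \<le> nrm (fsub f g)"
proof -
  assume "f \<in> H" "g \<in> H"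
  moreover have "fadd (fsub f g) g = f" by (auto simp: fsub_def fadd_def)
  ultimately show ?thesis using nrm_triangle_ineq[of "fsub f g" g] by simp
qed

lemma nrm_fsub_triangle:
  "f \<in> H \<Longrightarrow> g \<in> H \<Longrightarrow> h \<in> H \<Longrightarrow> nrm (fsub f h) \<le> nrm (fsub f g) + nrm (fsub g h)"
proof -
  assume "f \<in> H" "g \<in> H" "h \<in> H"
  moreover have "fsub f h = fadd (fsub f g) (fsub g h)" by (auto simp: fsub_def fadd_def)
  ultimately show ?thesis using nrm_triangle_ineq[of "fsub f g" "fsub g h"] by simp
qed

lemma nrm_sum: "(\<And>k. k \<in> A \<Longrightarrow> f k \<in> H) \<Longrightarrow> nrm (\<lambda>z. \<Sum>k\<in>A. f k z) \<le> (\<Sum>k\<in>A. nrm (f k))"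
proof (induction A rule: infinite_finite_induct)
  case (insert x F)
  have "(\<lambda>z. \<Sum>k\<in>insert x F. f k z) = fadd (f x) (\<lambda>z. \<Sum>k\<in>F. f k z)"
    using insert by (auto simp: fadd_def)
  then show ?case
    using insert nrm_triangle_ineq[of "f x" "\<lambda>z. \<Sum>k\<in>F. f k z"] sum_in[of F f] by simp
qed auto

definition hdist :: "(complex \<Rightarrow> complex) \<Rightarrow> (complex \<Rightarrow> complex) \<Rightarrow> real" where
  "hdist f g = (if f \<in> H \<and> g \<in> H then nrm (fsub f g) else 0)"

lemma Metric_space_hdist: "Metric_space H hdist"
proof
  fix f g h
  show "0 \<le> hdist f g" by (simp add: hdist_def)
  show "hdist f g = hdist g f" by (auto simp: hdist_def nrm_minus_commute)
  show "hdist f g = 0 \<longleftrightarrow> f = g" if "f \<in> H" "g \<in> H"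
    using that nrm_eq_0D[OF fsub_in[OF that]] by (auto simp: hdist_def fsub_def fun_eq_iff)
  show "hdist f h \<le> hdist f g + hdist g h" if "f \<in> H" "g \<in> H" "h \<in> H"
    using that by (simp add: hdist_def nrm_fsub_triangle)
qed

sublocale HM: Metric_space H hdist
  by (rule Metric_space_hdist)

lemma mcomplete_hdist: "HM.mcomplete"
  unfolding HM.mcomplete_def
proof (intro allI impI)
  fix s assume s: "HM.MCauchy s"
  then have sH: "\<And>n. s n \<in> H" by (auto simp: HM.MCauchy_def)
  then obtain f where f: "f \<in> H" "(\<lambda>n. nrm (fsub (s n) f)) \<longlonglongrightarrow> 0"
    using Cauchy_has_limit[of s] s unfolding HM.MCauchy_def hdist_def by force
  have "limitin HM.mtopology s f sequentially"
    unfolding HM.limitin_metric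
  proof (intro conjI allI impI)
    fix e :: real assume "e > 0"
    from tendstoD[OF f(2) this] show "\<forall>\<^sub>F n in sequentially. s n \<in> H \<and> hdist (s n) f < e"
      by eventually_elim (use sH f in \<open>simp add: hdist_def\<close>)
  qed (fact f)
  then show "\<exists>f. limitin HM.mtopology s f sequentially" by blast
qed

section \<open>Uniform boundedness\<close>


definition bounded_seminorm :: "((complex \<Rightarrow> complex) \<Rightarrow> real) \<Rightarrow> bool" where
  "bounded_seminorm p \<longleftrightarrow>
     (\<forall>f\<in>H. \<forall>g\<in>H. p (fadd f g) \<le> p f + p g) \<and>
     (\<forall>c. \<forall>f\<in>H. p (fscale c f) = cmod c * p f) \<and>
     (\<exists>L. \<forall>f\<in>H. p f \<le> L * nrm f)"

lemma bounded_seminorm_fadd: "bounded_seminorm p \<Longrightarrow> f \<in> H \<Longrightarrow> g \<in> H \<Longrightarrow> p (fadd f g) \<le> p f + p g"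
  unfolding bounded_seminorm_def by blast

lemma bounded_seminorm_fscale: "bounded_seminorm p \<Longrightarrow> f \<in> H \<Longrightarrow> p (fscale c f) = cmod c * p f"
  unfolding bounded_seminorm_def by blast

lemma bounded_seminorm_zero:
  assumes "bounded_seminorm p" shows "p (\<lambda>z. 0) = 0"
  using bounded_seminorm_fscale[OF assms zero_in, of 0] by (simp add: fscale_def)

lemma bounded_seminorm_diff:
  assumes p: "bounded_seminorm p" and f: "f \<in> H" and g: "g \<in> H"
  shows "p f - p g \<le> p (fsub f g)"
proof -
  have "fadd (fsub f g) g = f" by (auto simp: fsub_def fadd_def)
  then show ?thesis using bounded_seminorm_fadd[OF p fsub_in[OF f g] g] by simp
qed

lemma closedin_seminorm_sublevel:
  assumes p: "\<And>i. i \<in> I \<Longrightarrow> bounded_seminorm (p i)"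
  shows "closedin HM.mtopology {f \<in> H. \<forall>i\<in>I. p i f \<le> c}"
  unfolding HM.closedin_metric
proof (intro conjI allI impI)
  fix x assume x: "x \<in> H - {f \<in> H. \<forall>i\<in>I. p i f \<le> c}"
  then obtain i where i: "i \<in> I" "p i x > c" by (auto simp: not_le)
  obtain L where L: "\<forall>f\<in>H. p i f \<le> L * nrm f"
    using p[OF i(1)] unfolding bounded_seminorm_def by blast
  define r where "r = (p i x - c) / (\<bar>L\<bar> + 1)"
  have "r > 0" using i unfolding r_def by (simp add: add_pos_nonneg)
  moreover have "p i y > c" if y: "y \<in> HM.mball x r" for y
  proof -
    have yH: "y \<in> H" and d: "nrm (fsub x y) < r" using x y by (auto simp: hdist_def)
    have "p i (fsub x y) \<le> (\<bar>L\<bar> + 1) * nrm (fsub x y)"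
      using L x yH by (intro order_trans[OF bspec[OF L]] mult_right_mono) auto
    also have "\<dots> < p i x - c"
      using d unfolding r_def by (simp add: pos_less_divide_eq add_pos_nonneg mult.commute)
    finally show ?thesis using bounded_seminorm_diff[OF p[OF i(1)], of x y] x yH by simp
  qed
  ultimately show "\<exists>r>0. disjnt {f \<in> H. \<forall>i\<in>I. p i f \<le> c} (HM.mball x r)"
    using i(1) by (force simp: disjnt_def)
qed auto

text \<open>Scaled by r / (2 nrm f), every f is the difference of two points of the ball.\<close>
lemma bounded_seminorm_bound_from_ball:
  assumes p: "bounded_seminorm p" and x0: "x0 \<in> H" and r: "r > 0"
    and ball: "\<And>y. y \<in> HM.mball x0 r \<Longrightarrow> p y \<le> m" and f: "f \<in> H"
  shows "p f \<le> (4 * m / r) * nrm f"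
proof (cases "nrm f = 0")
  case True
  then show ?thesis using nrm_eq_0D[OF f] bounded_seminorm_zero[OF p] by simp
next
  case False
  then have nf: "nrm f > 0" using f nrm_nonneg[OF f] by linarith
  define c where "c = r / (2 * nrm f)"
  have c: "c > 0" using nf r by (simp add: c_def)
  define y where "y = fadd x0 (fscale (complex_of_real c) f)"
  have yH: "y \<in> H" using x0 f by (simp add: y_def)
  have "fsub x0 y = fscale (complex_of_real (- c)) f"
    by (auto simp: y_def fsub_def fadd_def fscale_def)
  then have "hdist x0 y = c * nrm f"
    using yH x0 f c by (simp add: hdist_def nrm_fscale)
  also have "\<dots> = r / 2" using nf by (simp add: c_def)
  finally have "hdist x0 y = r / 2" .
  then have py: "p y \<le> m" using ball r x0 yH by simp
  have "fscale (complex_of_real c) f = fadd y (fscale (-1) x0)"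
    by (auto simp: y_def fadd_def fscale_def)
  have "c * p f = p (fscale (complex_of_real c) f)"
    using bounded_seminorm_fscale[OF p f] c by simp
  also have "\<dots> = p (fadd y (fscale (-1) x0))"
    by (simp add: \<open>fscale (complex_of_real c) f = fadd y (fscale (-1) x0)\<close>)
  also have "\<dots> \<le> p y + p x0"
    using bounded_seminorm_fadd[OF p yH fscale_in[OF x0, of "-1"]]
      bounded_seminorm_fscale[OF p x0, of "-1"]
    by simp
  also have "\<dots> \<le> 2 * m" using py ball[of x0] x0 r by simp
  finally show ?thesis using c nf r by (simp add: c_def field_simps)
qed

theorem uniform_boundedness:
  assumes p: "\<And>i. i \<in> I \<Longrightarrow> bounded_seminorm (p i)"
    and pointwise: "\<And>f. f \<in> H \<Longrightarrow> \<exists>B. \<forall>i\<in>I. p i f \<le> B"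
  shows "\<exists>C\<ge>0. \<forall>i\<in>I. \<forall>f\<in>H. p i f \<le> C * nrm f"
proof -
  define F where "F m = {f \<in> H. \<forall>i\<in>I. p i f \<le> real m}" for m :: nat
  have closed: "closedin HM.mtopology (F m)" for m
    unfolding F_def by (rule closedin_seminorm_sublevel[OF p])
  have "\<Union>(range F) = H"
  proof (intro equalityI subsetI)
    fix f assume f: "f \<in> H"
    obtain B where "\<forall>i\<in>I. p i f \<le> B" using pointwise[OF f] by blast
    moreover obtain m where "B \<le> real m" using real_arch_simple by blast
    ultimately have "f \<in> F m" using f by (force simp: F_def)
    then show "f \<in> \<Union>(range F)" by blast
  qed (auto simp: F_def)
  then have "\<exists>m. HM.mtopology interior_of F m \<noteq> {}"
  proof (rule contrapos_pp)
    assume "\<nexists>m. HM.mtopology interior_of F m \<noteq> {}"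
    then have "HM.mtopology interior_of \<Union>(range F) = {}"
      using closed by (intro HM.metric_Baire_category_alt[OF mcomplete_hdist]) auto
    then show "\<Union>(range F) \<noteq> H"
      using interior_of_topspace[of HM.mtopology] zero_in by (metis HM.topspace_mtopology empty_iff)
  qed
  then obtain m x0 where x0: "x0 \<in> HM.mtopology interior_of F m" by blast
  have op: "openin HM.mtopology (HM.mtopology interior_of F m)" by simp
  have "\<exists>r>0. HM.mball x0 r \<subseteq> HM.mtopology interior_of F m"
    using conjunct2[OF op[unfolded HM.openin_mtopology]] x0 by simp
  then obtain r where r: "r > 0" and r_int: "HM.mball x0 r \<subseteq> HM.mtopology interior_of F m"
    by (elim exE conjE)
  have ball: "HM.mball x0 r \<subseteq> F m"
    using r_int interior_of_subset[of HM.mtopology "F m"] by (rule subset_trans)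
  have "x0 \<in> H" using x0 interior_of_subset_topspace[of HM.mtopology "F m"] by auto
  show ?thesis
  proof (intro exI conjI ballI)
    show "0 \<le> 4 * real m / r" using r by simp
    fix i f assume i: "i \<in> I" and f: "f \<in> H"
    have "p i y \<le> real m" if "y \<in> HM.mball x0 r" for y
      using ball that i by (auto simp: F_def)
    then show "p i f \<le> (4 * real m / r) * nrm f"
      by (rule bounded_seminorm_bound_from_ball[OF p[OF i] \<open>x0 \<in> H\<close> r _ f])
  qed
qed

lemma weakly_convergent_imp_bounded:
  assumes s: "\<And>n. s n \<in> H" and conv: "\<And>g. g \<in> H \<Longrightarrow> convergent (\<lambda>n. ip (s n) g)"
  shows "\<exists>B. \<forall>n. nrm (s n) \<le> B"
proof -
  have "\<exists>C\<ge>0. \<forall>n\<in>UNIV. \<forall>g\<in>H. cmod (ip g (s n)) \<le> C * nrm g"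
  proof (rule uniform_boundedness)
    show "bounded_seminorm (\<lambda>g. cmod (ip g (s n)))" for n
      unfolding bounded_seminorm_def
    proof (intro conjI ballI allI exI)
      fix f assume "f \<in> H"
      then show "cmod (ip f (s n)) \<le> nrm (s n) * nrm f"
        using ip_cauchy_schwarz[OF _ s] by (simp add: mult.commute)
    qed (auto simp: ip_fadd_left ip_fscale_left s norm_mult norm_triangle_ineq)
    fix g assume g: "g \<in> H"
    obtain B where "\<And>n. cmod (ip (s n) g) \<le> B"
      using convergent_imp_Bseq[OF conv[OF g]] by (auto simp: Bseq_def)
    then show "\<exists>B. \<forall>n\<in>UNIV. cmod (ip g (s n)) \<le> B"
      using ip_commute[OF s g] by auto
  qed
  then obtain C where C: "C \<ge> 0" "\<And>n g. g \<in> H \<Longrightarrow> cmod (ip g (s n)) \<le> C * nrm g" by blast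
  have "nrm (s n) \<le> C" for n
  proof -
    have "nrm (s n) * nrm (s n) \<le> C * nrm (s n)"
      using C(2)[OF s, of n n] ip_self_eq_of_real[OF s] nrm_nonneg[OF s, of n]
      by (simp add: norm_mult power2_eq_square)
    then show ?thesis using C(1) nrm_nonneg[OF s]
      by (cases "nrm (s n) = 0") (auto simp: mult_le_cancel_right)
  qed
  then show ?thesis by blast
qed

section \<open>Riesz representation\<close>


lemma nrm_tendsto:
  assumes s: "\<And>n. s n \<in> H" and h: "h \<in> H" and lim: "(\<lambda>n. nrm (fsub (s n) h)) \<longlonglongrightarrow> 0"
  shows "(\<lambda>n. nrm (s n)) \<longlonglongrightarrow> nrm h"
proof (rule tendsto_sandwich)
  have "nrm h - nrm (fsub (s n) h) \<le> nrm (s n) \<and> nrm (s n) \<le> nrm h + nrm (fsub (s n) h)" for n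
    using nrm_triangle_ineq2[OF h s[of n]] nrm_triangle_ineq2[OF s[of n] h]
      nrm_minus_commute[OF h s[of n]]
    by linarith
  then show "\<forall>\<^sub>F n in sequentially. nrm h - nrm (fsub (s n) h) \<le> nrm (s n)"
    and "\<forall>\<^sub>F n in sequentially. nrm (s n) \<le> nrm h + nrm (fsub (s n) h)"
    by (auto intro: always_eventually)
qed (use tendsto_add[OF tendsto_const lim, of "nrm h"] tendsto_diff[OF tendsto_const lim, of "nrm h"]
    in simp_all)

definition bounded_linear_functional :: "((complex \<Rightarrow> complex) \<Rightarrow> complex) \<Rightarrow> bool" where
  "bounded_linear_functional \<phi> \<longleftrightarrow>
     (\<forall>f\<in>H. \<forall>g\<in>H. \<phi> (fadd f g) = \<phi> f + \<phi> g) \<and>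
     (\<forall>c. \<forall>f\<in>H. \<phi> (fscale c f) = c * \<phi> f) \<and>
     (\<exists>L. \<forall>f\<in>H. cmod (\<phi> f) \<le> L * nrm f)"

lemma bounded_linear_functional_fadd:
  "bounded_linear_functional \<phi> \<Longrightarrow> f \<in> H \<Longrightarrow> g \<in> H \<Longrightarrow> \<phi> (fadd f g) = \<phi> f + \<phi> g"
  unfolding bounded_linear_functional_def by blast

lemma bounded_linear_functional_fscale:
  "bounded_linear_functional \<phi> \<Longrightarrow> f \<in> H \<Longrightarrow> \<phi> (fscale c f) = c * \<phi> f"
  unfolding bounded_linear_functional_def by blast

lemma bounded_linear_functional_fsub:
  "bounded_linear_functional \<phi> \<Longrightarrow> f \<in> H \<Longrightarrow> g \<in> H \<Longrightarrow> \<phi> (fsub f g) = \<phi> f - \<phi> g"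
  by (simp add: fsub_eq_fadd_fscale bounded_linear_functional_fadd bounded_linear_functional_fscale)

lemma bounded_linear_functional_tendsto:
  assumes \<phi>: "bounded_linear_functional \<phi>" and s: "\<And>n. s n \<in> H" and h: "h \<in> H"
    and lim: "(\<lambda>n. nrm (fsub (s n) h)) \<longlonglongrightarrow> 0"
  shows "(\<lambda>n. \<phi> (s n)) \<longlonglongrightarrow> \<phi> h"
proof -
  obtain L where L: "\<And>f. f \<in> H \<Longrightarrow> cmod (\<phi> f) \<le> L * nrm f"
    using \<phi> unfolding bounded_linear_functional_def by blast
  have "(\<lambda>n. \<phi> (s n) - \<phi> h) \<longlonglongrightarrow> 0"
  proof (rule Lim_null_comparison)
    show "\<forall>\<^sub>F n in sequentially. norm (\<phi> (s n) - \<phi> h) \<le> L * nrm (fsub (s n) h)"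
      using L[OF fsub_in[OF s h]] by (simp add: bounded_linear_functional_fsub[OF \<phi> s h])
    show "(\<lambda>n. L * nrm (fsub (s n) h)) \<longlonglongrightarrow> 0"
      using tendsto_mult_right_zero[OF lim] by simp
  qed
  then show ?thesis by (simp add: LIM_zero_iff)
qed

lemma nrm_diff_midpoint_le:
  assumes f: "f \<in> H" and g: "g \<in> H" and d: "0 \<le> d" "d \<le> nrm (fscale (1/2) (fadd f g))"
  shows "(nrm (fsub f g))\<^sup>2 \<le> 2 * (nrm f)\<^sup>2 + 2 * (nrm g)\<^sup>2 - 4 * d\<^sup>2"
proof -
  have "2 * d \<le> nrm (fadd f g)" using d f g by (simp add: nrm_fscale)
  then have "4 * d\<^sup>2 \<le> (nrm (fadd f g))\<^sup>2"
    using power_mono[of "2 * d" _ 2] d by (simp add: power_mult_distrib)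
  then show ?thesis using nrm_parallelogram[OF f g] by linarith
qed

lemma minimizing_sequence_Cauchy:
  assumes A: "A \<subseteq> H" and convex: "\<And>f g. f \<in> A \<Longrightarrow> g \<in> A \<Longrightarrow> fscale (1/2) (fadd f g) \<in> A"
    and lower: "\<And>h. h \<in> A \<Longrightarrow> d \<le> nrm h" and d: "0 \<le> d"
    and s: "\<And>n. s n \<in> A" and lim: "(\<lambda>n. nrm (s n)) \<longlonglongrightarrow> d"
  shows "\<forall>e>0. \<exists>N. \<forall>m\<ge>N. \<forall>n\<ge>N. nrm (fsub (s m) (s n)) < e"
proof (intro allI impI)
  fix e :: real assume e: "e > 0"
  have "(\<lambda>n. (nrm (s n))\<^sup>2) \<longlonglongrightarrow> d\<^sup>2" using lim by (intro tendsto_intros)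
  then obtain N where N: "\<And>n. n \<ge> N \<Longrightarrow> (nrm (s n))\<^sup>2 < d\<^sup>2 + e\<^sup>2 / 4"
    using e
    by (force dest: order_tendstoD(2)[of _ _ _ "d\<^sup>2 + e\<^sup>2 / 4"] simp: eventually_sequentially)
  have "nrm (fsub (s m) (s n)) < e" if "m \<ge> N" "n \<ge> N" for m n
  proof -
    have sH: "s m \<in> H" "s n \<in> H" using A s by auto
    have "(nrm (fsub (s m) (s n)))\<^sup>2 \<le> 2 * (nrm (s m))\<^sup>2 + 2 * (nrm (s n))\<^sup>2 - 4 * d\<^sup>2"
      using sH d lower[OF convex[OF s s]] by (intro nrm_diff_midpoint_le) auto
    also have "\<dots> < e\<^sup>2" using N[OF that(1)] N[OF that(2)] by linarith
    finally show ?thesis using e by (simp add: power_less_imp_less_base)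
  qed
  then show "\<exists>N. \<forall>m\<ge>N. \<forall>n\<ge>N. nrm (fsub (s m) (s n)) < e" by blast
qed

theorem exists_min_nrm:
  assumes A: "A \<subseteq> H" "A \<noteq> {}"
    and convex: "\<And>f g. f \<in> A \<Longrightarrow> g \<in> A \<Longrightarrow> fscale (1/2) (fadd f g) \<in> A"
    and closed: "\<And>s h. (\<And>n. s n \<in> A) \<Longrightarrow> h \<in> H \<Longrightarrow> (\<lambda>n. nrm (fsub (s n) h)) \<longlonglongrightarrow> 0 \<Longrightarrow> h \<in> A"
  shows "\<exists>h0\<in>A. \<forall>h\<in>A. nrm h0 \<le> nrm h"
proof -
  define d where "d = Inf (nrm ` A)"
  have bdd: "bdd_below (nrm ` A)" using A by (intro bdd_belowI[of _ 0]) auto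
  have lower: "d \<le> nrm h" if "h \<in> A" for h
    unfolding d_def using bdd that by (simp add: cInf_lower)
  have d0: "0 \<le> d" unfolding d_def using A by (intro cInf_greatest) auto
  have "d \<in> closure (nrm ` A)" unfolding d_def using A bdd by (intro closure_contains_Inf) auto
  then obtain x where x: "\<And>n. x n \<in> nrm ` A" and "x \<longlonglongrightarrow> d" unfolding closure_sequential by blast
  have "\<forall>n. \<exists>h. h \<in> A \<and> nrm h = x n" using x by (metis imageE)
  then obtain s where "\<forall>n. s n \<in> A \<and> nrm (s n) = x n" by (rule choice[THEN exE])
  then have s: "\<And>n. s n \<in> A" and lim: "(\<lambda>n. nrm (s n)) \<longlonglongrightarrow> d"
    using \<open>x \<longlonglongrightarrow> d\<close> by auto
  have sH: "\<And>n. s n \<in> H" using A s by auto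
  obtain h0 where h0: "h0 \<in> H" "(\<lambda>n. nrm (fsub (s n) h0)) \<longlonglongrightarrow> 0"
    using Cauchy_has_limit[OF sH minimizing_sequence_Cauchy[OF A(1) convex lower d0 s lim]] by blast
  have "h0 \<in> A" using closed[OF s h0] .
  moreover have "nrm h0 = d" using LIMSEQ_unique[OF nrm_tendsto[OF sH h0] lim] .
  ultimately show ?thesis using lower by blast
qed

lemma min_nrm_orthogonal:
  assumes h0: "h0 \<in> H" and v: "v \<in> H" and min: "\<And>t. nrm h0 \<le> nrm (fadd h0 (fscale t v))"
  shows "ip v h0 = 0"
proof (rule ccontr)
  assume "ip v h0 \<noteq> 0"
  define a where "a = ip v h0"
  define \<epsilon> where "\<epsilon> = 1 / ((nrm v)\<^sup>2 + 1)"
  have \<epsilon>: "\<epsilon> > 0" "\<epsilon> * (nrm v)\<^sup>2 < 1" unfolding \<epsilon>_def by (simp_all add: add_pos_nonneg field_simps)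
  define w where "w = fadd h0 (fscale (- complex_of_real \<epsilon> * cnj a) v)"
  have wH: "w \<in> H" using h0 v by (simp add: w_def)
  have "ip w w = ip h0 h0 - 2 * complex_of_real \<epsilon> * (a * cnj a)
      + (complex_of_real \<epsilon>)\<^sup>2 * (a * cnj a) * ip v v"
    using h0 v ip_commute[OF v h0]
    by (simp add: w_def ip_fadd_left ip_fadd_right ip_fscale_left ip_fscale_right a_def
        algebra_simps power2_eq_square)
  also have "\<dots> = complex_of_real ((nrm h0)\<^sup>2 - 2 * \<epsilon> * (cmod a)\<^sup>2 + \<epsilon>\<^sup>2 * (cmod a)\<^sup>2 * (nrm v)\<^sup>2)"
    using h0 v by (simp add: ip_self_eq_of_real complex_norm_square[symmetric])
  finally have "(nrm w)\<^sup>2 = (nrm h0)\<^sup>2 - 2 * \<epsilon> * (cmod a)\<^sup>2 + \<epsilon>\<^sup>2 * (cmod a)\<^sup>2 * (nrm v)\<^sup>2"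
    using ip_self_eq_of_real[OF wH] by (metis of_real_eq_iff)
  also have "\<dots> = (nrm h0)\<^sup>2 - \<epsilon> * (cmod a)\<^sup>2 * (2 - \<epsilon> * (nrm v)\<^sup>2)"
    by (simp add: algebra_simps power2_eq_square)
  also have "\<dots> < (nrm h0)\<^sup>2"
    using \<epsilon> \<open>ip v h0 \<noteq> 0\<close> unfolding a_def by (simp add: mult_pos_pos)
  finally have "nrm w < nrm h0" using h0 by (simp add: power_less_imp_less_base)
  then show False using min[of "- complex_of_real \<epsilon> * cnj a"] unfolding w_def by simp
qed

theorem riesz_representation:
  assumes \<phi>: "bounded_linear_functional \<phi>"
  shows "\<exists>g\<in>H. \<forall>h\<in>H. \<phi> h = ip h g"
proof (cases "\<forall>h\<in>H. \<phi> h = 0")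
  case True
  then show ?thesis by (intro bexI[of _ "\<lambda>z. 0"]) (auto simp: ip_zero_right)
next
  case False
  then obtain u where u: "u \<in> H" "\<phi> u \<noteq> 0" by blast
  define A where "A = {h \<in> H. \<phi> h = 1}"
  have "fscale (1 / \<phi> u) u \<in> A" using u by (simp add: A_def bounded_linear_functional_fscale[OF \<phi>])
  moreover have "fscale (1/2) (fadd f g) \<in> A" if "f \<in> A" "g \<in> A" for f g
    using that
    by (auto simp: A_def bounded_linear_functional_fscale[OF \<phi>] bounded_linear_functional_fadd[OF \<phi>])
  moreover have "h \<in> A" if "\<And>n. s n \<in> A" "h \<in> H" "(\<lambda>n. nrm (fsub (s n) h)) \<longlonglongrightarrow> 0" for s h
    using bounded_linear_functional_tendsto[OF \<phi> _ that(2,3)] that(1) that(2)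
      LIMSEQ_unique[of "\<lambda>n. 1" 1 "\<phi> h"]
    by (auto simp: A_def)
  ultimately obtain h0 where h0: "h0 \<in> H" "\<phi> h0 = 1" and min: "\<And>h. h \<in> A \<Longrightarrow> nrm h0 \<le> nrm h"
    using exists_min_nrm[of A] unfolding A_def by blast
  have "(nrm h0)\<^sup>2 \<noteq> 0"
    using h0 nrm_eq_0D[OF h0(1)] bounded_linear_functional_fscale[OF \<phi> zero_in, of 0]
    by (auto simp: fscale_def)
  show ?thesis
  proof (intro bexI ballI)
    fix h assume h: "h \<in> H"
    define v where "v = fsub h (fscale (\<phi> h) h0)"
    have v: "v \<in> H" "\<phi> v = 0"
      using h h0 by (simp_all add: v_def bounded_linear_functional_fsub[OF \<phi>]
          bounded_linear_functional_fscale[OF \<phi>])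
    have "ip v h0 = 0"
      using min v h0 by (intro min_nrm_orthogonal)
        (auto simp: A_def bounded_linear_functional_fadd[OF \<phi>] bounded_linear_functional_fscale[OF \<phi>])
    then have "ip h h0 = \<phi> h * complex_of_real ((nrm h0)\<^sup>2)"
      using h h0 by (simp add: v_def ip_fsub_left ip_fscale_left ip_self_eq_of_real)
    then show "\<phi> h = ip h (fscale (1 / complex_of_real ((nrm h0)\<^sup>2)) h0)"
      using h h0 \<open>(nrm h0)\<^sup>2 \<noteq> 0\<close> by (simp add: ip_fscale_right field_simps)
  qed (use h0 in simp)
qed

lemma bounded_linear_functional_ip:
  assumes "g \<in> H" shows "bounded_linear_functional (\<lambda>f. ip f g)"
  unfolding bounded_linear_functional_def
proof (intro conjI ballI allI exI)
  fix f assume "f \<in> H"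
  then show "cmod (ip f g) \<le> nrm g * nrm f"
    using ip_cauchy_schwarz[OF _ assms] by (simp add: mult.commute)
qed (simp_all add: assms ip_fadd_left ip_fscale_left)

end

section \<open>The reproducing kernel\<close>

locale repr_kernel_space = hilbert_fun_space +
  fixes K :: "complex \<Rightarrow> complex \<Rightarrow> complex"
  assumes repr_kernel: "is_repr_kernel H ip K"
begin

lemma kernel_in: "w \<in> ball 0 1 \<Longrightarrow> (\<lambda>z. K z w) \<in> H"
  using repr_kernel unfolding is_repr_kernel_def by blast

lemma reproducing: "h \<in> H \<Longrightarrow> w \<in> ball 0 1 \<Longrightarrow> h w = ip h (\<lambda>z. K z w)"
  using repr_kernel unfolding is_repr_kernel_def by blast

lemma kernel_cnj_commute: "z \<in> ball 0 1 \<Longrightarrow> w \<in> ball 0 1 \<Longrightarrow> cnj (K z w) = K w z"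
  using reproducing[OF kernel_in] ip_commute[OF kernel_in kernel_in] by metis

lemma bounded_seminorm_eval: "w \<in> ball 0 1 \<Longrightarrow> bounded_seminorm (\<lambda>h. cmod (h w))"
  unfolding bounded_seminorm_def
proof (intro conjI ballI allI exI)
  fix f assume "w \<in> ball 0 1" "f \<in> H"
  then show "cmod (f w) \<le> nrm (\<lambda>z. K z w) * nrm f"
    using ip_cauchy_schwarz[OF _ kernel_in] reproducing by (simp add: mult.commute)
qed (auto simp: fadd_def fscale_def norm_triangle_ineq norm_mult)

lemma eval_uniformly_bounded_on_cball:
  assumes "r < 1"
  shows "\<exists>S\<ge>0. \<forall>w\<in>cball 0 r. \<forall>h\<in>H. cmod (h w) \<le> S * nrm h"
proof (rule uniform_boundedness)
  have sub: "cball 0 r \<subseteq> ball (0::complex) 1" using assms by auto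
  then show "bounded_seminorm (\<lambda>h. cmod (h w))" if "w \<in> cball 0 r" for w
    using that by (intro bounded_seminorm_eval) auto
  fix h assume "h \<in> H"
  then have "continuous_on (cball 0 r) h"
    using sub holomorphic_on_imp_continuous_on[OF holomorphic_on_disk] continuous_on_subset by blast
  then have "bounded (h ` cball 0 r)" by (intro compact_imp_bounded compact_continuous_image) auto
  then show "\<exists>B. \<forall>w\<in>cball 0 r. cmod (h w) \<le> B" by (auto simp: bounded_iff)
qed

lemma taylor_coeff_fadd:
  "f \<in> H \<Longrightarrow> g \<in> H \<Longrightarrow> taylor_coeff (fadd f g) j = taylor_coeff f j + taylor_coeff g j"
  unfolding taylor_coeff_def fadd_def
  by (subst higher_deriv_add[of f "ball 0 1" g]) (auto simp: holomorphic_on_disk add_divide_distrib)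

lemma taylor_coeff_fscale: "f \<in> H \<Longrightarrow> taylor_coeff (fscale c f) j = c * taylor_coeff f j"
  unfolding taylor_coeff_def fscale_def
  by (subst higher_deriv_cmult[of f "ball 0 1"]) (auto simp: holomorphic_on_disk)

lemma bounded_linear_functional_taylor_coeff:
  "bounded_linear_functional (\<lambda>h. taylor_coeff h j)"
  unfolding bounded_linear_functional_def
proof (intro conjI ballI allI)
  obtain S where S: "\<forall>w\<in>cball 0 (1/2). \<forall>h\<in>H. cmod (h w) \<le> S * nrm h"
    using eval_uniformly_bounded_on_cball[of "1/2"] by auto
  have "cmod (taylor_coeff h j) \<le> (2 ^ j * S) * nrm h" if h: "h \<in> H" for h
  proof -
    have "h holomorphic_on ball 0 (1/2)"
      using holomorphic_on_disk[OF h] by (rule holomorphic_on_subset) auto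
    moreover have "continuous_on (cball 0 (1/2)) h"
      using holomorphic_on_imp_continuous_on[OF holomorphic_on_disk[OF h]]
      by (rule continuous_on_subset) auto
    ultimately have "norm ((deriv ^^ j) h 0) \<le> fact j * (S * nrm h) / (1/2) ^ j"
      using S h by (intro Cauchy_inequality) auto
    then show ?thesis by (simp add: taylor_coeff_def norm_divide field_simps)
  qed
  then show "\<exists>L. \<forall>h\<in>H. cmod (taylor_coeff h j) \<le> L * nrm h" by blast
qed (simp_all add: taylor_coeff_fadd taylor_coeff_fscale)

text \<open>Conjugate symmetry of the kernel turns the antiholomorphic derivative in kder into an
  ordinary Taylor coefficient.\<close>
lemma kder_eq_cnj_taylor_coeff:
  assumes z: "z \<in> ball 0 1"
  shows "kder K j z = cnj (taylor_coeff (\<lambda>w. K w z) j)"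
proof -
  have "\<forall>\<^sub>F w in nhds 0. w \<in> ball (0::complex) 1" by (rule eventually_nhds_in_open) auto
  then have "\<forall>\<^sub>F w in nhds 0. cnj (K z w) = K w z"
    by eventually_elim (use z kernel_cnj_commute in auto)
  then have "(deriv ^^ j) (\<lambda>w. cnj (K z w)) 0 = (deriv ^^ j) (\<lambda>w. K w z) 0"
    by (rule higher_deriv_cong_ev) simp
  then show ?thesis by (simp add: kder_def taylor_coeff_def complex_cnj_divide)
qed

lemma kder_off_disk:
  assumes z: "z \<notin> ball 0 1"
  shows "kder K j z = 0"
proof -
  have "\<forall>\<^sub>F w in nhds 0. w \<in> ball (0::complex) 1" by (rule eventually_nhds_in_open) auto
  then have "\<forall>\<^sub>F w in nhds 0. cnj (K z w) = 0"
    by eventually_elim (use z vanishes_off_disk[OF kernel_in] in auto)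
  then have "(deriv ^^ j) (\<lambda>w. cnj (K z w)) 0 = (deriv ^^ j) (\<lambda>w. 0) 0"
    by (rule higher_deriv_cong_ev) simp
  then show ?thesis by (simp add: kder_def)
qed

lemma kder_represents_taylor_coeff:
  shows "kder K j \<in> H" and "\<And>h. h \<in> H \<Longrightarrow> taylor_coeff h j = ip h (kder K j)"
proof -
  obtain g where g: "g \<in> H" "\<And>h. h \<in> H \<Longrightarrow> taylor_coeff h j = ip h g"
    using riesz_representation[OF bounded_linear_functional_taylor_coeff] by blast
  have "g z = kder K j z" for z
  proof (cases "z \<in> ball 0 1")
    case True
    have "g z = cnj (ip (\<lambda>w. K w z) g)"
      using reproducing[OF g(1) True] ip_commute[OF kernel_in[OF True] g(1)] by simp
    then show ?thesis using g(2)[OF kernel_in[OF True]] kder_eq_cnj_taylor_coeff[OF True] by simp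
  next
    case False
    then show ?thesis using vanishes_off_disk[OF g(1)] kder_off_disk by simp
  qed
  then have "g = kder K j" by blast
  then show "kder K j \<in> H" and "\<And>h. h \<in> H \<Longrightarrow> taylor_coeff h j = ip h (kder K j)"
    using g by auto
qed

lemma nrm_kder_le:
  assumes C: "0 \<le> C" and bound: "\<And>h. h \<in> H \<Longrightarrow> a * cmod (taylor_coeff h j) \<le> C * nrm h"
  shows "a * nrm (kder K j) \<le> C"
proof -
  note k = kder_represents_taylor_coeff[where j = j]
  have "a * (nrm (kder K j))\<^sup>2 \<le> C * nrm (kder K j)"
    using bound[OF k(1)] k(2)[OF k(1)] ip_self_eq_of_real[OF k(1)] by (simp add: norm_power)
  then show ?thesis
    using C nrm_nonneg[OF k(1)]
    by (cases "nrm (kder K j) = 0") (auto simp: power2_eq_square mult.assoc mult_le_cancel_right)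
qed

end

section \<open>Cesaro numbers\<close>

definition cesaro_number :: "real \<Rightarrow> nat \<Rightarrow> real" where
  "cesaro_number \<alpha> k = (real k + \<alpha>) gchoose k"

text \<open>The Cesaro numbers are the Taylor coefficients of (1 - x) powr (- \<alpha> - 1); the
  coefficients of the reciprocal series (1 - x) powr (\<alpha> + 1) are the following.\<close>
definition cesaro_inverse_coeff :: "real \<Rightarrow> nat \<Rightarrow> real" where
  "cesaro_inverse_coeff \<alpha> m = (-1) ^ m * ((\<alpha> + 1) gchoose m)"

definition cesaro_weight :: "real \<Rightarrow> nat \<Rightarrow> nat \<Rightarrow> real" where
  "cesaro_weight \<alpha> n j = real (n choose j) / ((real n + \<alpha>) gchoose j)"

lemma gbinomial_shifted_pos:
  assumes "0 \<le> \<alpha>" "j \<le> k"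
  shows "0 < (real k + \<alpha>) gchoose j"
proof -
  have "0 < (\<Prod>i = 0..<j. real k + \<alpha> - real i)" using assms by (intro prod_pos) auto
  then show ?thesis using gbinomial_mult_fact[of j "real k + \<alpha>"]
    by (metis fact_gt_zero zero_less_mult_pos)
qed

lemma cesaro_number_pos: "0 \<le> \<alpha> \<Longrightarrow> 0 < cesaro_number \<alpha> k"
  unfolding cesaro_number_def by (rule gbinomial_shifted_pos) auto

lemma cesaro_number_Suc:
  "cesaro_number \<alpha> (Suc k) = cesaro_number \<alpha> k * ((real k + \<alpha> + 1) / (real k + 1))"
  unfolding cesaro_number_def using gbinomial_rec[of "real k + \<alpha>" k] by (simp add: add_ac)

lemma cesaro_number_mono:
  assumes "0 \<le> \<alpha>" "k \<le> n"
  shows "cesaro_number \<alpha> k \<le> cesaro_number \<alpha> n"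
  using assms(2)
proof (induction n rule: dec_induct)
  case (step n)
  have "cesaro_number \<alpha> n * 1 \<le> cesaro_number \<alpha> n * ((real n + \<alpha> + 1) / (real n + 1))"
    using assms(1) cesaro_number_pos[OF assms(1), of n] by (intro mult_left_mono) auto
  then show ?case using step by (simp add: cesaro_number_Suc)
qed simp

text \<open>Chu-Vandermonde for the exponents - \<alpha> - 1 and \<alpha> + 1.\<close>
lemma cesaro_inverse_convolution:
  "(\<Sum>k=0..n. cesaro_inverse_coeff \<alpha> (n - k) * cesaro_number \<alpha> k) = (if n = 0 then 1 else 0)"
proof -
  have "(\<Sum>k=0..n. cesaro_inverse_coeff \<alpha> (n - k) * cesaro_number \<alpha> k)
      = (-1) ^ n * (\<Sum>k=0..n. (- (\<alpha> + 1) gchoose k) * ((\<alpha> + 1) gchoose (n - k)))"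
    unfolding sum_distrib_left
  proof (rule sum.cong)
    fix k assume "k \<in> {0..n}"
    then have "(-1::real) ^ n = (-1) ^ (n - k) * (-1) ^ k" by (simp flip: power_add)
    then show "cesaro_inverse_coeff \<alpha> (n - k) * cesaro_number \<alpha> k
        = (-1) ^ n * ((- (\<alpha> + 1) gchoose k) * ((\<alpha> + 1) gchoose (n - k)))"
      by (simp add: cesaro_inverse_coeff_def cesaro_number_def gbinomial_minus' algebra_simps)
  qed simp
  also have "\<dots> = (-1) ^ n * ((- (\<alpha> + 1) + (\<alpha> + 1)) gchoose n)"
    by (simp only: gbinomial_Vandermonde)
  finally show ?thesis by (simp add: gbinomial_0_left)
qed

lemma cesaro_weight_mult_number:
  assumes "0 \<le> \<alpha>" "j \<le> k"
  shows "cesaro_weight \<alpha> k j * cesaro_number \<alpha> k = cesaro_number \<alpha> (k - j)"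
proof -
  have "cesaro_number \<alpha> k * real (k choose j) = ((real k + \<alpha>) gchoose j) * cesaro_number \<alpha> (k - j)"
    using gbinomial_trinomial_revision[OF assms(2), of "real k + \<alpha>"] assms(2)
    by (simp add: cesaro_number_def binomial_gbinomial of_nat_diff algebra_simps)
  then show ?thesis using gbinomial_shifted_pos[OF assms]
    by (simp add: cesaro_weight_def field_simps)
qed

lemma gbinomial_bigo_powr: "(\<lambda>n. a gchoose n) \<in> O(\<lambda>n. real n powr (- a - 1))"
proof -
  have "(\<lambda>n. a gchoose n) \<in> O(\<lambda>n. (-1) ^ n / exp ((a + 1) * ln (real n)))"
    using gbinomial_asymptotic[of a] by (intro bigoI_tendsto) auto
  also have "(\<lambda>n. (-1) ^ n / exp ((a + 1) * ln (real n))) \<in> O(\<lambda>n. real n powr (- a - 1))"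
  proof (rule bigoI[of _ 1])
    show "\<forall>\<^sub>F n in sequentially.
        norm ((-1) ^ n / exp ((a + 1) * ln (real n))) \<le> 1 * norm (real n powr (- a - 1))"
      using eventually_gt_at_top[of "0::nat"]
      by eventually_elim
        (simp add: abs_mult power_abs powr_def divide_inverse algebra_simps flip: exp_minus)
  qed
  finally show ?thesis .
qed

lemma cesaro_number_bigo: "cesaro_number \<alpha> \<in> O(\<lambda>n. real n powr \<alpha>)"
proof -
  have "cesaro_number \<alpha> = (\<lambda>n. (-1) ^ n * (- (\<alpha> + 1) gchoose n))"
    by (simp add: fun_eq_iff cesaro_number_def gbinomial_minus' add.commute)
  also have "\<dots> \<in> O(\<lambda>n. - (\<alpha> + 1) gchoose n)"
    by (intro bigoI[of _ 1] always_eventually allI) (simp add: abs_mult power_abs)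
  also have "(\<lambda>n. - (\<alpha> + 1) gchoose n) \<in> O(\<lambda>n. real n powr \<alpha>)"
    using gbinomial_bigo_powr[of "- (\<alpha> + 1)"] by simp
  finally show ?thesis .
qed

lemma summable_abs_cesaro_inverse_coeff:
  assumes "-1 < \<alpha>"
  shows "summable (\<lambda>m. \<bar>cesaro_inverse_coeff \<alpha> m\<bar>)"
proof (rule summable_comparison_test_bigo)
  show "summable (\<lambda>m. norm (real m powr (- (\<alpha> + 1) - 1)))"
    using assms by (simp add: summable_real_powr_iff)
  show "(\<lambda>m. \<bar>cesaro_inverse_coeff \<alpha> m\<bar>) \<in> O(\<lambda>m. real m powr (- (\<alpha> + 1) - 1))"
    using gbinomial_bigo_powr[of "\<alpha> + 1"]
    by (simp add: cesaro_inverse_coeff_def abs_mult power_abs)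
qed

lemma cesaro_convolution_abs_le:
  assumes "0 \<le> \<alpha>"
  shows "(\<Sum>k=0..n. \<bar>cesaro_inverse_coeff \<alpha> (n - k)\<bar> * cesaro_number \<alpha> k)
      \<le> (\<Sum>m. \<bar>cesaro_inverse_coeff \<alpha> m\<bar>) * cesaro_number \<alpha> n"
proof -
  have "(\<Sum>k=0..n. \<bar>cesaro_inverse_coeff \<alpha> (n - k)\<bar> * cesaro_number \<alpha> k)
      \<le> (\<Sum>k=0..n. \<bar>cesaro_inverse_coeff \<alpha> (n - k)\<bar>) * cesaro_number \<alpha> n"
    unfolding sum_distrib_right using assms
    by (intro sum_mono mult_left_mono cesaro_number_mono) auto
  also have "(\<Sum>k=0..n. \<bar>cesaro_inverse_coeff \<alpha> (n - k)\<bar>) = (\<Sum>m<Suc n. \<bar>cesaro_inverse_coeff \<alpha> m\<bar>)"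
    by (subst sum.atLeastAtMost_rev) (simp add: atLeast0AtMost lessThan_Suc_atMost)
  also have "\<dots> \<le> (\<Sum>m. \<bar>cesaro_inverse_coeff \<alpha> m\<bar>)"
    using assms by (intro sum_le_suminf summable_abs_cesaro_inverse_coeff) auto
  finally show ?thesis using cesaro_number_pos[OF assms, of n] by (simp add: mult_right_mono)
qed

lemma sum_triangle_swap:
  fixes n :: nat
  shows "(\<Sum>k=0..n. \<Sum>j=0..k. f k j) = (\<Sum>j=0..n. \<Sum>k=j..n. f k j)"
proof -
  have "(\<Sum>k=0..n. \<Sum>j=0..k. f k j) = (\<Sum>k\<in>{0..n}. \<Sum>j\<in>{j. j \<in> {0..n} \<and> j \<le> k}. f k j)"
    by (intro sum.cong) auto
  also have "\<dots> = (\<Sum>j\<in>{0..n}. \<Sum>k\<in>{k. k \<in> {0..n} \<and> j \<le> k}. f k j)"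
    by (rule sum.swap_restrict) auto
  also have "\<dots> = (\<Sum>j=0..n. \<Sum>k=j..n. f k j)"
    by (intro sum.cong) auto
  finally show ?thesis .
qed

lemma cesaro_inversion:
  fixes c :: "nat \<Rightarrow> complex"
  assumes "0 \<le> \<alpha>"
  shows "(\<Sum>k=0..n. complex_of_real (cesaro_inverse_coeff \<alpha> (n - k) * cesaro_number \<alpha> k) *
            (\<Sum>j=0..k. complex_of_real (cesaro_weight \<alpha> k j) * c j)) = c n"
proof -
  have "(\<Sum>k=0..n. complex_of_real (cesaro_inverse_coeff \<alpha> (n - k) * cesaro_number \<alpha> k) *
            (\<Sum>j=0..k. complex_of_real (cesaro_weight \<alpha> k j) * c j))
      = (\<Sum>k=0..n. \<Sum>j=0..k.
          complex_of_real (cesaro_inverse_coeff \<alpha> (n - k) * cesaro_number \<alpha> (k - j)) * c j)"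
    unfolding sum_distrib_left
    by (intro sum.cong refl) (simp add: cesaro_weight_mult_number[OF assms, symmetric] mult_ac)
  also have "\<dots> = (\<Sum>j=0..n. complex_of_real
      (\<Sum>k=j..n. cesaro_inverse_coeff \<alpha> (n - k) * cesaro_number \<alpha> (k - j)) * c j)"
    by (simp add: sum_triangle_swap sum_distrib_right)
  also have "\<dots> = (\<Sum>j=0..n. (if j = n then c j else 0))"
  proof (intro sum.cong refl)
    fix j assume "j \<in> {0..n}"
    then have "(\<Sum>k=j..n. cesaro_inverse_coeff \<alpha> (n - k) * cesaro_number \<alpha> (k - j))
        = (\<Sum>i=0..n - j. cesaro_inverse_coeff \<alpha> (n - j - i) * cesaro_number \<alpha> i)"
      by (intro sum.reindex_bij_witness[of _ "\<lambda>i. i + j" "\<lambda>k. k - j"]) auto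
    also have "\<dots> = (if j = n then 1 else 0)"
      using \<open>j \<in> {0..n}\<close> by (simp only: cesaro_inverse_convolution) auto
    finally show "complex_of_real
        (\<Sum>k=j..n. cesaro_inverse_coeff \<alpha> (n - k) * cesaro_number \<alpha> (k - j)) * c j
        = (if j = n then c j else 0)"
      by simp
  qed
  finally show ?thesis by simp
qed

section \<open>Cesaro means\<close>

locale repr_kernel_poly_space = repr_kernel_space +
  assumes dmon_in: "\<And>j. dmon j \<in> H"
begin

lemma cesaro_eq_sum:
  "cesaro \<alpha> n h
    = (\<lambda>z. \<Sum>j\<in>{0..n}. fscale (complex_of_real (cesaro_weight \<alpha> n j) * taylor_coeff h j) (dmon j) z)"
  by (simp add: fun_eq_iff cesaro_def cesaro_weight_def fscale_def dmon_def)

lemma cesaro_in: "cesaro \<alpha> n h \<in> H"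
  unfolding cesaro_eq_sum by (rule sum_in) (simp add: dmon_in)

lemma bounded_seminorm_cesaro: "bounded_seminorm (\<lambda>h. nrm (cesaro \<alpha> n h))"
  unfolding bounded_seminorm_def
proof (intro conjI ballI allI)
  fix f g c assume f: "f \<in> H" and g: "g \<in> H"
  have "cesaro \<alpha> n (fadd f g) = fadd (cesaro \<alpha> n f) (cesaro \<alpha> n g)"
    using f g by (simp add: fun_eq_iff cesaro_def fadd_def taylor_coeff_fadd[unfolded fadd_def]
        ring_distribs sum.distrib)
  then show "nrm (cesaro \<alpha> n (fadd f g)) \<le> nrm (cesaro \<alpha> n f) + nrm (cesaro \<alpha> n g)"
    by (simp add: nrm_triangle_ineq cesaro_in)
  have "cesaro \<alpha> n (fscale c f) = fscale c (cesaro \<alpha> n f)"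
    using f by (simp add: fun_eq_iff cesaro_def fscale_def taylor_coeff_fscale[unfolded fscale_def]
        sum_distrib_left mult_ac)
  then show "nrm (cesaro \<alpha> n (fscale c f)) = cmod c * nrm (cesaro \<alpha> n f)"
    by (simp add: nrm_fscale cesaro_in)
next
  have "\<forall>j. \<exists>L. \<forall>h\<in>H. cmod (taylor_coeff h j) \<le> L * nrm h"
    using bounded_linear_functional_taylor_coeff unfolding bounded_linear_functional_def by blast
  then obtain L where L: "\<And>j h. h \<in> H \<Longrightarrow> cmod (taylor_coeff h j) \<le> L j * nrm h" by metis
  have "nrm (cesaro \<alpha> n h) \<le> (\<Sum>j=0..n. \<bar>cesaro_weight \<alpha> n j\<bar> * L j * nrm (dmon j)) * nrm h"
    if h: "h \<in> H" for h
  proof -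
    have "nrm (cesaro \<alpha> n h)
        \<le> (\<Sum>j=0..n. nrm (fscale (complex_of_real (cesaro_weight \<alpha> n j) * taylor_coeff h j) (dmon j)))"
      unfolding cesaro_eq_sum by (rule nrm_sum) (simp add: dmon_in)
    also have "\<dots> = (\<Sum>j=0..n. \<bar>cesaro_weight \<alpha> n j\<bar> * cmod (taylor_coeff h j) * nrm (dmon j))"
      by (simp add: nrm_fscale dmon_in norm_mult)
    also have "\<dots> \<le> (\<Sum>j=0..n. \<bar>cesaro_weight \<alpha> n j\<bar> * (L j * nrm h) * nrm (dmon j))"
      using L[OF h] dmon_in by (intro sum_mono mult_right_mono mult_left_mono) auto
    finally show ?thesis by (simp add: sum_distrib_left sum_distrib_right mult_ac)
  qed
  then show "\<exists>L. \<forall>h\<in>H. nrm (cesaro \<alpha> n h) \<le> L * nrm h" by blast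
qed

lemma cesaro_uniformly_bounded:
  assumes "(\<forall>h\<in>H. \<forall>g\<in>H. (\<lambda>n. ip (cesaro \<alpha> n h) g) \<longlonglongrightarrow> ip h g)
         \<or> (\<forall>h\<in>H. (\<lambda>n. hnorm ip (\<lambda>z. cesaro \<alpha> n h z - h z)) \<longlonglongrightarrow> 0)"
  shows "\<exists>M\<ge>0. \<forall>n. \<forall>h\<in>H. nrm (cesaro \<alpha> n h) \<le> M * nrm h"
proof -
  have weak: "(\<lambda>n. ip (cesaro \<alpha> n h) g) \<longlonglongrightarrow> ip h g" if "h \<in> H" "g \<in> H" for h g
    using assms that bounded_linear_functional_tendsto[OF bounded_linear_functional_ip cesaro_in, of g]
    by (auto simp: fsub_def)
  have "\<exists>M\<ge>0. \<forall>n\<in>UNIV. \<forall>h\<in>H. nrm (cesaro \<alpha> n h) \<le> M * nrm h"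
  proof (rule uniform_boundedness)
    fix h assume h: "h \<in> H"
    have "convergent (\<lambda>n. ip (cesaro \<alpha> n h) g)" if "g \<in> H" for g
      using weak[OF h that] by (rule convergentI)
    then obtain B where "\<forall>n. nrm (cesaro \<alpha> n h) \<le> B"
      using weakly_convergent_imp_bounded[of "\<lambda>n. cesaro \<alpha> n h"] cesaro_in by blast
    then show "\<exists>B. \<forall>n\<in>UNIV. nrm (cesaro \<alpha> n h) \<le> B" by blast
  qed (rule bounded_seminorm_cesaro)
  then show ?thesis by blast
qed

lemma taylor_coeff_eq_cesaro_combination:
  assumes "0 \<le> \<alpha>"
  shows "fscale (taylor_coeff h n) (dmon n)
       = (\<lambda>z. \<Sum>k\<in>{0..n}.
           fscale (complex_of_real (cesaro_inverse_coeff \<alpha> (n - k) * cesaro_number \<alpha> k)) (cesaro \<alpha> k h) z)"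
proof
  fix z
  show "fscale (taylor_coeff h n) (dmon n) z = (\<Sum>k\<in>{0..n}. fscale (complex_of_real
      (cesaro_inverse_coeff \<alpha> (n - k) * cesaro_number \<alpha> k)) (cesaro \<alpha> k h) z)"
    using cesaro_inversion[OF assms, of n "\<lambda>j. taylor_coeff h j * z ^ j"]
    by (simp add: fscale_def dmon_def cesaro_def cesaro_weight_def mult.assoc)
qed

lemma taylor_coeff_bound:
  assumes "0 \<le> \<alpha>" and M: "\<And>k h. h \<in> H \<Longrightarrow> nrm (cesaro \<alpha> k h) \<le> M * nrm h" and h: "h \<in> H"
  shows "nrm (dmon n) * cmod (taylor_coeff h n)
      \<le> M * (\<Sum>k=0..n. \<bar>cesaro_inverse_coeff \<alpha> (n - k)\<bar> * cesaro_number \<alpha> k) * nrm h"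
proof -
  have "nrm (dmon n) * cmod (taylor_coeff h n) = nrm (fscale (taylor_coeff h n) (dmon n))"
    by (simp add: nrm_fscale dmon_in)
  also have "\<dots> \<le> (\<Sum>k=0..n. nrm (fscale (complex_of_real
      (cesaro_inverse_coeff \<alpha> (n - k) * cesaro_number \<alpha> k)) (cesaro \<alpha> k h)))"
    unfolding taylor_coeff_eq_cesaro_combination[OF assms(1)]
    by (rule nrm_sum) (simp add: cesaro_in)
  also have "\<dots>
      = (\<Sum>k=0..n. \<bar>cesaro_inverse_coeff \<alpha> (n - k)\<bar> * cesaro_number \<alpha> k * nrm (cesaro \<alpha> k h))"
    using cesaro_number_pos[OF assms(1)] by (simp add: nrm_fscale cesaro_in norm_mult abs_of_pos)
  also have "\<dots> \<le> (\<Sum>k=0..n. \<bar>cesaro_inverse_coeff \<alpha> (n - k)\<bar> * cesaro_number \<alpha> k * (M * nrm h))"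
    using M[OF h] cesaro_number_pos[OF assms(1)]
    by (intro sum_mono mult_left_mono) (auto simp: less_imp_le)
  finally show ?thesis by (simp add: sum_distrib_left sum_distrib_right mult_ac)
qed

lemma nrm_dmon_kder_le:
  assumes \<alpha>: "0 \<le> \<alpha>" and M: "0 \<le> M" "\<And>n h. h \<in> H \<Longrightarrow> nrm (cesaro \<alpha> n h) \<le> M * nrm h"
  shows "nrm (dmon n) * nrm (kder K n)
      \<le> M * (\<Sum>m. \<bar>cesaro_inverse_coeff \<alpha> m\<bar>) * cesaro_number \<alpha> n"
proof (rule nrm_kder_le)
  have "0 \<le> (\<Sum>m. \<bar>cesaro_inverse_coeff \<alpha> m\<bar>)"
    using \<alpha> by (intro suminf_nonneg summable_abs_cesaro_inverse_coeff) auto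
  then show "0 \<le> M * (\<Sum>m. \<bar>cesaro_inverse_coeff \<alpha> m\<bar>) * cesaro_number \<alpha> n"
    using M(1) cesaro_number_pos[OF \<alpha>, of n] by simp
  fix h assume h: "h \<in> H"
  have "nrm (dmon n) * cmod (taylor_coeff h n)
      \<le> M * (\<Sum>k=0..n. \<bar>cesaro_inverse_coeff \<alpha> (n - k)\<bar> * cesaro_number \<alpha> k) * nrm h"
    by (rule taylor_coeff_bound[OF \<alpha> M(2) h])
  also have "\<dots> \<le> M * ((\<Sum>m. \<bar>cesaro_inverse_coeff \<alpha> m\<bar>) * cesaro_number \<alpha> n) * nrm h"
    using cesaro_convolution_abs_le[OF \<alpha>] M(1) h by (intro mult_right_mono mult_left_mono) auto
  finally show "nrm (dmon n) * cmod (taylor_coeff h n)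
      \<le> M * (\<Sum>m. \<bar>cesaro_inverse_coeff \<alpha> m\<bar>) * cesaro_number \<alpha> n * nrm h"
    by (simp add: mult_ac)
qed

end

theorem theorem6p7:
  fixes H :: "(complex \<Rightarrow> complex) set"
    and ip :: "(complex \<Rightarrow> complex) \<Rightarrow> (complex \<Rightarrow> complex) \<Rightarrow> complex"
    and K :: "complex \<Rightarrow> complex \<Rightarrow> complex"
    and \<alpha> :: real
  assumes "hol_hilbert_space H ip"
    and "norm_conv_implies_pointwise H ip"
    and "\<forall>j. dmon j \<in> H"
    and "is_repr_kernel H ip K"
    and "\<alpha> \<ge> 0"
    and "(\<forall>h\<in>H. \<forall>g\<in>H. (\<lambda>n. ip (cesaro \<alpha> n h) g) \<longlonglongrightarrow> ip h g)
         \<or> (\<forall>h\<in>H. (\<lambda>n. hnorm ip (\<lambda>z. cesaro \<alpha> n h z - h z)) \<longlonglongrightarrow> 0)"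
  shows "(\<lambda>j. hnorm ip (dmon j) * hnorm ip (kder K j)) \<in> O(\<lambda>j. real j powr \<alpha>)"
proof -
  interpret repr_kernel_poly_space H ip K
    using assms(1,3,4) by unfold_locales auto
  obtain M where M: "0 \<le> M" "\<And>n h. h \<in> H \<Longrightarrow> hnorm ip (cesaro \<alpha> n h) \<le> M * hnorm ip h"
    using cesaro_uniformly_bounded[OF assms(6)] by blast
  have "(\<lambda>j. hnorm ip (dmon j) * hnorm ip (kder K j)) \<in> O(cesaro_number \<alpha>)"
  proof (rule bigoI[of _ "M * (\<Sum>m. \<bar>cesaro_inverse_coeff \<alpha> m\<bar>)"], intro always_eventually allI)
    fix j
    show "norm (hnorm ip (dmon j) * hnorm ip (kder K j))
        \<le> M * (\<Sum>m. \<bar>cesaro_inverse_coeff \<alpha> m\<bar>) * norm (cesaro_number \<alpha> j)"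
      using nrm_dmon_kder_le[OF assms(5) M] cesaro_number_pos[OF assms(5), of j]
        dmon_in kder_represents_taylor_coeff(1)[of j] by simp
  qed
  also have "cesaro_number \<alpha> \<in> O(\<lambda>j. real j powr \<alpha>)"
    by (rule cesaro_number_bigo)
  finally show ?thesis .
qed

end
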